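(* Let $G$ be a finite group, $V$ a real finite-dimensional orthogonal representation of $G$, and let $f\in\mathcal{C}_G(V)$ be standard with respect to $x_0$, $U$ and $\epsilon$, where $H=G_{x_0}$. For $g\in G$ put $K=G_{gx_0}=gHg^{-1}$; then $gU$ is an open subset of $V_K$ and $f$ restricts to a map $f_{gx_0}=f|_{gU}\colon gU\to V^K$ (so that $f_{gx_0}(y)=gf(g^{-1}y)$). Then for each $g\in G$, \[ \deg(f_{gx_0},gU)=\deg(f|_U,U), \] where $\deg$ denotes the Brouwer degree (with respect to $0$) of a map from an open subset of a finite-dimensional space into that space (here $V^H$, resp. $V^K$).
   Context: $\mathcal{C}_G(V)$ is the set of continuous equivariant maps $f\colon D_f\to V$ with $D_f$ open $G$-invariant in $V$ and $f^{-1}(0)$ compact. For a subgroup $H$, $G_x=\{g: gx=x\}$, $V^H=\{x\in V: H\subset G_x\}$ (a linear subspace), $V_H=\{x\in V: G_x=H\}$ (open in $V^H$), and $(V^H)^\perp$ is the orthogonal complement. For $U$ open in $V_H$ and $\epsilon>0$, $U^\epsilon=\{x+v: x\in U, v\in (V^H)^\perp, |v|<\epsilon\}$. A map $f\in\mathcal{C}_G(V)$ is standard with respect to $x_0\in D_f$, an open subset $U\subset V_H$ with $H=G_{x_0}$, and $\epsilon>0$ if: $f^{-1}(0)=Gx_0$, $f^{-1}(0)\cap U=\{x_0\}$, $U^\epsilon\subset D_f$, and $f(x+v)=f(x)+v$ for all $x\in U$, $v\in(V^H)^\perp$, $|v|<\epsilon$. By equivariance $f$ maps $V_H\cap D_f$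 into $V^H$. *)

theory Defs
  imports "HOL-Analysis.Analysis" "HOL-Homology.Homology" "HOL-Algebra.Group"
begin

definition orth_rep :: "('g, 'b) monoid_scheme \<Rightarrow> ('g \<Rightarrow> 'v::euclidean_space \<Rightarrow> 'v) \<Rightarrow> bool" where
  "orth_rep G \<rho> \<longleftrightarrow> group G \<and> finite (carrier G)
     \<and> (\<forall>g\<in>carrier G. orthogonal_transformation (\<rho> g))
     \<and> (\<forall>g\<in>carrier G. \<forall>h\<in>carrier G. \<rho> (g \<otimes>\<^bsub>G\<^esub> h) = \<rho> g \<circ> \<rho> h)
     \<and> \<rho> \<one>\<^bsub>G\<^esub> = id"

definition stab :: "('g, 'b) monoid_scheme \<Rightarrow> ('g \<Rightarrow> 'v \<Rightarrow> 'v) \<Rightarrow> 'v \<Rightarrow> 'g set" where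
  "stab G \<rho> x = {g \<in> carrier G. \<rho> g x = x}"

definition fixsp :: "('g, 'b) monoid_scheme \<Rightarrow> ('g \<Rightarrow> 'v \<Rightarrow> 'v) \<Rightarrow> 'g set \<Rightarrow> 'v set" where
  "fixsp G \<rho> H = {x. H \<subseteq> stab G \<rho> x}"

definition orbtype :: "('g, 'b) monoid_scheme \<Rightarrow> ('g \<Rightarrow> 'v \<Rightarrow> 'v) \<Rightarrow> 'g set \<Rightarrow> 'v set" where
  "orbtype G \<rho> H = {x. stab G \<rho> x = H}"

definition thicken :: "('g, 'b) monoid_scheme \<Rightarrow> ('g \<Rightarrow> 'v::real_inner \<Rightarrow> 'v) \<Rightarrow> 'g set \<Rightarrow> 'v set \<Rightarrow> real \<Rightarrow> 'v set" where
  "thicken G \<rho> H U \<epsilon> = {x + v | x v. x \<in> U \<and> v \<in> orthogonal_comp (fixsp G \<rho> H) \<and> norm v < \<epsilon>}"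

definition in_CG :: "('g, 'b) monoid_scheme \<Rightarrow> ('g \<Rightarrow> 'v::euclidean_space \<Rightarrow> 'v) \<Rightarrow> 'v set \<Rightarrow> ('v \<Rightarrow> 'v) \<Rightarrow> bool" where
  "in_CG G \<rho> D f \<longleftrightarrow> open D \<and> (\<forall>g\<in>carrier G. \<rho> g ` D \<subseteq> D) \<and> continuous_on D f
     \<and> (\<forall>g\<in>carrier G. \<forall>x\<in>D. f (\<rho> g x) = \<rho> g (f x))
     \<and> compact {x\<in>D. f x = 0}"

definition standard :: "('g, 'b) monoid_scheme \<Rightarrow> ('g \<Rightarrow> 'v::euclidean_space \<Rightarrow> 'v) \<Rightarrow> 'v set \<Rightarrow> ('v \<Rightarrow> 'v)
    \<Rightarrow> 'v \<Rightarrow> 'v set \<Rightarrow> real \<Rightarrow> bool" where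
  "standard G \<rho> D f x0 U \<epsilon> \<longleftrightarrow>
     x0 \<in> D \<and> \<epsilon> > 0
     \<and> openin (top_of_set (orbtype G \<rho> (stab G \<rho> x0))) U
     \<and> {x\<in>D. f x = 0} = (\<lambda>g. \<rho> g x0) ` carrier G
     \<and> {x\<in>D. f x = 0} \<inter> U = {x0}
     \<and> thicken G \<rho> (stab G \<rho> x0) U \<epsilon> \<subseteq> D
     \<and> (\<forall>x\<in>U. \<forall>v\<in>orthogonal_comp (fixsp G \<rho> (stab G \<rho> x0)). norm v < \<epsilon> \<longrightarrow> f (x + v) = f x + v)"

text \<open>Brouwer degree (with respect to 0) of f : U \<rightarrow> W, U open in the linear subspace W,
  zero set K = {x \<in> U. f x = 0} compact, defined homologically with n = dim W:
  for a ball B = cball 0 r with K \<subseteq> ball 0 r and any class z in H_n(W, W - B), let u be the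
  class in H_n(U, U - K) corresponding under the excision isomorphism to the image of z
  in H_n(W, W - K); then f_* u = d \<cdot> (image of z in H_n(W, W - {0})).  The degree is this d.
  (The same orientation is used on domain and target, so no orientation choice is needed.)\<close>
definition local_degree :: "'v::euclidean_space set \<Rightarrow> 'v set \<Rightarrow> ('v \<Rightarrow> 'v) \<Rightarrow> int" where
  "local_degree W U f = (THE d::int. \<forall>r z u.
      let K = {x\<in>U. f x = 0}; n = int (dim W); X = top_of_set W in
      K \<subseteq> ball 0 r
      \<and> z \<in> carrier (relative_homology_group n X (W - cball 0 r))
      \<and> u \<in> carrier (relative_homology_group n (top_of_set U) (U - K))
      \<and> hom_induced n (top_of_set U) (U - K) X (W - K) id u
          = hom_induced n X (W - cball 0 r) X (W - K) id z
      \<longrightarrow> hom_induced n (top_of_set U) (U - K) X (W - {0}) f u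
          = pow (relative_homology_group n X (W - {0}))
                (hom_induced n X (W - cball 0 r) X (W - {0}) id z) d)"

end

theory Submission
  imports Defs
begin

(*
  Acting by g is an orthogonal isomorphism of V^H onto V^K which carries U onto gU and, by
  equivariance, conjugates f on U into f on gU.  The homological degree is invariant under such
  a conjugation: pulling the defining classes back along g^-1 and pushing the defining identity
  forward along g turns the identity characterising deg(f|U) into the one characterising
  deg(f|gU), and vice versa.
*)

definition excision_corresponds ::
    "'v::euclidean_space set \<Rightarrow> 'v set \<Rightarrow> 'v set \<Rightarrow> real \<Rightarrow> 'v chain set \<Rightarrow> 'v chain set
      \<Rightarrow> bool" where
  "excision_corresponds W U K r z u \<longleftrightarrow>
     K \<subseteq> ball 0 r
     \<and> z \<in> carrier (relative_homology_group (int (dim W)) (top_of_set W) (W - cball 0 r))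
     \<and> u \<in> carrier (relative_homology_group (int (dim W)) (top_of_set U) (U - K))
     \<and> hom_induced (int (dim W)) (top_of_set U) (U - K) (top_of_set W) (W - K) id u
         = hom_induced (int (dim W)) (top_of_set W) (W - cball 0 r) (top_of_set W) (W - K) id z"

definition is_local_degree ::
    "'v::euclidean_space set \<Rightarrow> 'v set \<Rightarrow> ('v \<Rightarrow> 'v) \<Rightarrow> int \<Rightarrow> bool" where
  "is_local_degree W U f d \<longleftrightarrow> (\<forall>r z u.
      let K = {x\<in>U. f x = 0}; n = int (dim W) in
      excision_corresponds W U K r z u
      \<longrightarrow> hom_induced n (top_of_set U) (U - K) (top_of_set W) (W - {0}) f u
          = pow (relative_homology_group n (top_of_set W) (W - {0}))
                (hom_induced n (top_of_set W) (W - cball 0 r) (top_of_set W) (W - {0}) id z) d)"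

lemma local_degree_eq_The: "local_degree W U f = (THE d. is_local_degree W U f d)"
  unfolding local_degree_def is_local_degree_def excision_corresponds_def by (simp add: Let_def)

lemma hom_induced_compose_eq:
  assumes "continuous_map X Y f" "f \<in> S \<rightarrow> T" "continuous_map Y Z g" "g \<in> T \<rightarrow> R"
    and "\<And>x. x \<in> topspace X \<Longrightarrow> g (f x) = h x"
  shows "hom_induced p Y T Z R g (hom_induced p X S Y T f c) = hom_induced p X S Z R h c"
  using hom_induced_compose'[OF assms(1-4)] hom_induced_eq[of X "g \<circ> f" h] assms(5) by simp

lemma hom_induced_compose3_eq:
  assumes "continuous_map X Y e" "e \<in> S \<rightarrow> T" "continuous_map Y Z f" "f \<in> T \<rightarrow> R"
    and "continuous_map Z Q g" "g \<in> R \<rightarrow> P"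
    and "\<And>x. x \<in> topspace X \<Longrightarrow> g (f (e x)) = h x"
  shows "hom_induced p Z R Q P g (hom_induced p Y T Z R f (hom_induced p X S Y T e c))
       = hom_induced p X S Q P h c"
proof -
  have "continuous_map X Z (f \<circ> e)" and "f \<circ> e \<in> S \<rightarrow> R"
    using assms(1-4) by (auto intro: continuous_map_compose)
  then show ?thesis
    using hom_induced_compose'[OF assms(1-4)] hom_induced_compose_eq[of X Z "f \<circ> e" S R Q g P h]
      assms(5-7) by simp
qed

lemma orthogonal_transformation_inv_apply [simp]:
  fixes T :: "'v::euclidean_space \<Rightarrow> 'v"
  assumes "orthogonal_transformation T"
  shows "Hilbert_Choice.inv T (T x) = x" and "T (Hilbert_Choice.inv T y) = y"
  by (simp_all add: assms orthogonal_transformation_inj orthogonal_transformation_surj surj_f_inv_f)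

lemma continuous_on_orthogonal_transformation:
  fixes T :: "'v::euclidean_space \<Rightarrow> 'v"
  shows "orthogonal_transformation T \<Longrightarrow> continuous_on A T"
  by (simp add: linear_continuous_on linear_conv_bounded_linear[symmetric]
      orthogonal_transformation_linear)

lemma dim_orthogonal_image:
  fixes T :: "'v::euclidean_space \<Rightarrow> 'v"
  assumes "orthogonal_transformation T"
  shows "dim (T ` W) = dim W"
proof (rule antisym)
  show "dim (T ` W) \<le> dim W"
    by (rule dim_image_le[OF orthogonal_transformation_linear[OF assms]])
  have "W = Hilbert_Choice.inv T ` T ` W"
    using assms by (simp add: image_comp)
  then show "dim W \<le> dim (T ` W)"
    by (metis assms dim_image_le orthogonal_transformation_inv orthogonal_transformation_linear)
qed

lemma excision_corresponds_orthogonal_pullback: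
  fixes T :: "'v::euclidean_space \<Rightarrow> 'v" and W :: "'v set"
  defines "S \<equiv> Hilbert_Choice.inv T" and "n \<equiv> int (dim W)"
  assumes T: "orthogonal_transformation T" and UW: "U \<subseteq> W"
    and corr: "excision_corresponds (T ` W) (T ` U) (T ` K) r z u"
  shows "excision_corresponds W U K r
           (hom_induced n (top_of_set (T ` W)) (T ` W - cball 0 r) (top_of_set W) (W - cball 0 r)
              S z)
           (hom_induced n (top_of_set (T ` U)) (T ` U - T ` K) (top_of_set U) (U - K) S u)"
proof -
  have ST [simp]: "S (T x) = x" and TS [simp]: "T (S y) = y" and normT [simp]: "norm (T x) = norm x"
    for x y
    unfolding S_def using T by (simp_all add: orthogonal_transformation_norm)
  have [simp]: "norm (S y) = norm y" for y
    by (metis normT TS)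
  have [simp]: "continuous_on A T" "continuous_on A S" for A
    unfolding S_def using T orthogonal_transformation_inv[OF T]
    by (simp_all add: continuous_on_orthogonal_transformation)
  have [simp]: "T x = T y \<longleftrightarrow> x = y" for x y
    by (metis ST)
  have K_ball: "K \<subseteq> ball 0 r" and
    uz: "hom_induced n (top_of_set (T ` U)) (T ` U - T ` K) (top_of_set (T ` W)) (T ` W - T ` K)
           id u
       = hom_induced n (top_of_set (T ` W)) (T ` W - cball 0 r) (top_of_set (T ` W)) (T ` W - T ` K)
           id z"
    using corr T
    by (auto simp: excision_corresponds_def n_def dim_orthogonal_image orthogonal_transformation_norm)
  have "hom_induced n (top_of_set U) (U - K) (top_of_set W) (W - K) id
          (hom_induced n (top_of_set (T ` U)) (T ` U - T ` K) (top_of_set U) (U - K) S u)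
      = hom_induced n (top_of_set (T ` U)) (T ` U - T ` K) (top_of_set W) (W - K) S u"
    by (rule hom_induced_compose_eq) (use UW in \<open>auto simp: continuous_map_subtopology_eu\<close>)
  also have "\<dots> = hom_induced n (top_of_set (T ` W)) (T ` W - T ` K) (top_of_set W) (W - K) S
      (hom_induced n (top_of_set (T ` U)) (T ` U - T ` K) (top_of_set (T ` W)) (T ` W - T ` K)
        id u)"
    by (rule hom_induced_compose_eq[symmetric]) (use UW in \<open>auto simp: continuous_map_subtopology_eu\<close>)
  also have "\<dots> = hom_induced n (top_of_set (T ` W)) (T ` W - cball 0 r) (top_of_set W) (W - K) S z"
    unfolding uz
    by (rule hom_induced_compose_eq) (use K_ball in \<open>auto simp: continuous_map_subtopology_eu\<close>)
  also have "\<dots> = hom_induced n (top_of_set W) (W - cball 0 r) (top_of_set W) (W - K) id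
      (hom_induced n (top_of_set (T ` W)) (T ` W - cball 0 r) (top_of_set W) (W - cball 0 r) S z)"
    by (rule hom_induced_compose_eq[symmetric]) (use K_ball in \<open>auto simp: continuous_map_subtopology_eu\<close>)
  finally show ?thesis
    using K_ball by (simp add: excision_corresponds_def n_def hom_induced_carrier)
qed

lemma is_local_degree_orthogonal_image:
  fixes T f :: "'v::euclidean_space \<Rightarrow> 'v"
  assumes T: "orthogonal_transformation T"
    and UW: "U \<subseteq> W" and fUW: "f ` U \<subseteq> W" and contf: "continuous_on U f"
    and equivariant: "\<And>x. x \<in> U \<Longrightarrow> f (T x) = T (f x)"
    and zero: "a \<in> U" "f a = 0" \<comment> \<open>used only to get r \<ge> 0, so that 0 \<in> cball 0 r\<close>
    and deg: "is_local_degree W U f d"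
  shows "is_local_degree (T ` W) (T ` U) f d"
proof -
  define S where "S = Hilbert_Choice.inv T"
  have [simp]: "S (T x) = x" "T (S y) = y" "norm (T x) = norm x" for x y
    unfolding S_def using T by (simp_all add: orthogonal_transformation_norm)
  have [simp]: "continuous_on A T" "continuous_on A S" for A
    unfolding S_def using T orthogonal_transformation_inv[OF T]
    by (simp_all add: continuous_on_orthogonal_transformation)
  define K where "K = {x\<in>U. f x = 0}"
  have [simp]: "T x = 0 \<longleftrightarrow> x = 0" for x
    by (metis \<open>norm (T x) = norm x\<close> norm_eq_zero)
  then have zeros: "{y\<in>T ` U. f y = 0} = T ` K"
    using equivariant by (auto simp: K_def)
  show ?thesis
    unfolding is_local_degree_def Let_def zeros dim_orthogonal_image[OF T]
  proof (intro allI impI)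
    fix r z u
    define n where "n = int (dim W)"
    define z' where
      "z' = hom_induced n (top_of_set (T ` W)) (T ` W - cball 0 r) (top_of_set W) (W - cball 0 r) S z"
    define u' where
      "u' = hom_induced n (top_of_set (T ` U)) (T ` U - T ` K) (top_of_set U) (U - K) S u"
    define T_star where
      "T_star = hom_induced n (top_of_set W) (W - {0}) (top_of_set (T ` W)) (T ` W - {0}) T"
    assume corr: "excision_corresponds (T ` W) (T ` U) (T ` K) r z u"
    then have corr': "excision_corresponds W U K r z' u'"
      unfolding z'_def u'_def n_def S_def by (rule excision_corresponds_orthogonal_pullback[OF T UW])
    then have "norm a < r"
      using zero by (auto simp: excision_corresponds_def K_def)
    then have r: "0 \<le> r"
      using norm_ge_zero[of a] by linarith
    have "hom_induced n (top_of_set (T ` U)) (T ` U - T ` K) (top_of_set (T ` W)) (T ` W - {0}) f u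
        = T_star (hom_induced n (top_of_set U) (U - K) (top_of_set W) (W - {0}) f u')"
      unfolding u'_def T_star_def by (rule hom_induced_compose3_eq[symmetric])
        (use contf fUW equivariant in \<open>auto simp: continuous_map_subtopology_eu K_def\<close>)
    also have "\<dots> = pow (relative_homology_group n (top_of_set (T ` W)) (T ` W - {0}))
        (T_star (hom_induced n (top_of_set W) (W - cball 0 r) (top_of_set W) (W - {0}) id z')) d"
      using deg corr'
      unfolding is_local_degree_def Let_def K_def[symmetric] n_def[symmetric] T_star_def
      by (simp add: hom_int_pow[OF hom_induced_hom hom_induced_carrier])
    also have "T_star (hom_induced n (top_of_set W) (W - cball 0 r) (top_of_set W) (W - {0}) id z')
        = hom_induced n (top_of_set (T ` W)) (T ` W - cball 0 r) (top_of_set (T ` W)) (T ` W - {0})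
            id z"
      unfolding z'_def T_star_def
      by (rule hom_induced_compose3_eq) (use r in \<open>auto simp: continuous_map_subtopology_eu\<close>)
    finally show "hom_induced n (top_of_set (T ` U)) (T ` U - T ` K) (top_of_set (T ` W)) (T ` W - {0})
          f u
        = pow (relative_homology_group n (top_of_set (T ` W)) (T ` W - {0}))
            (hom_induced n (top_of_set (T ` W)) (T ` W - cball 0 r) (top_of_set (T ` W)) (T ` W - {0})
              id z) d" .
  qed
qed

lemma local_degree_orthogonal_image:
  fixes T f :: "'v::euclidean_space \<Rightarrow> 'v"
  assumes T: "orthogonal_transformation T"
    and UW: "U \<subseteq> W" and fUW: "f ` U \<subseteq> W" and contf: "continuous_on U f"
    and equivariant: "\<And>x. x \<in> U \<Longrightarrow> f (T x) = T (f x)"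
    and zero: "a \<in> U" "f a = 0"
  shows "local_degree (T ` W) (T ` U) f = local_degree W U f"
proof -
  define S where "S = Hilbert_Choice.inv T"
  have S: "orthogonal_transformation S"
    unfolding S_def by (rule orthogonal_transformation_inv[OF T])
  have [simp]: "S (T x) = x" "T (S y) = y" for x y
    unfolding S_def using T by simp_all
  have "S ` T ` U = U"
    by (simp add: image_comp)
  then have "continuous_on (T ` U) (\<lambda>y. f (S y))"
    by (intro continuous_on_compose2[OF contf continuous_on_orthogonal_transformation[OF S]]) simp
  then have "continuous_on (T ` U) (\<lambda>y. T (f (S y)))"
    by (rule continuous_on_compose2[OF continuous_on_orthogonal_transformation[OF T, of UNIV]]) simp
  then have contf': "continuous_on (T ` U) f"
    by (rule continuous_on_eq) (auto simp: equivariant)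
  have equivariant_inv: "f (S y) = S (f y)" if "y \<in> T ` U" for y
    using that equivariant by auto
  have "f (T a) = 0"
    using zero equivariant linear_0[OF orthogonal_transformation_linear[OF T]] by simp
  have "is_local_degree (T ` W) (T ` U) f d \<longleftrightarrow> is_local_degree W U f d" for d
  proof
    assume deg: "is_local_degree (T ` W) (T ` U) f d"
    have "is_local_degree (S ` T ` W) (S ` T ` U) f d"
      using UW fUW zero \<open>f (T a) = 0\<close>
      by (intro is_local_degree_orthogonal_image[OF S _ _ contf' equivariant_inv _ _ deg,
            where a = "T a"])
        (auto simp: equivariant)
    then show "is_local_degree W U f d"
      by (simp add: image_comp)
  qed (rule is_local_degree_orthogonal_image[OF T UW fUW contf equivariant zero])
  then show ?thesis
    by (simp add: local_degree_eq_The)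
qed

locale action = group G for G (structure) +
  fixes \<rho> :: "'a \<Rightarrow> 'v \<Rightarrow> 'v"
  assumes act_mult: "a \<in> carrier G \<Longrightarrow> b \<in> carrier G \<Longrightarrow> \<rho> (a \<otimes> b) x = \<rho> a (\<rho> b x)"
    and act_one: "\<rho> \<one> x = x"
begin

lemma act_inv_act [simp]: "g \<in> carrier G \<Longrightarrow> \<rho> (inv g) (\<rho> g x) = x"
  by (metis act_mult act_one inv_closed l_inv)

lemma act_act_inv [simp]: "g \<in> carrier G \<Longrightarrow> \<rho> g (\<rho> (inv g) x) = x"
  by (metis act_mult act_one inv_closed r_inv)

lemma stab_act:
  assumes g: "g \<in> carrier G"
  shows "stab G \<rho> (\<rho> g x) = (\<lambda>h. g \<otimes> h \<otimes> inv g) ` stab G \<rho> x"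
proof
  show "stab G \<rho> (\<rho> g x) \<subseteq> (\<lambda>h. g \<otimes> h \<otimes> inv g) ` stab G \<rho> x"
  proof
    fix k
    assume k: "k \<in> stab G \<rho> (\<rho> g x)"
    then have "inv g \<otimes> k \<otimes> g \<in> stab G \<rho> x"
      using g by (auto simp: stab_def act_mult)
    moreover have "k = g \<otimes> (inv g \<otimes> k \<otimes> g) \<otimes> inv g"
      using g k by (simp add: stab_def m_assoc flip: m_assoc[of g "inv g"])
    ultimately show "k \<in> (\<lambda>h. g \<otimes> h \<otimes> inv g) ` stab G \<rho> x"
      by blast
  qed
  show "(\<lambda>h. g \<otimes> h \<otimes> inv g) ` stab G \<rho> x \<subseteq> stab G \<rho> (\<rho> g x)"
    using g by (auto simp: stab_def act_mult)
qed

lemma fixsp_conjugate: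
  assumes g: "g \<in> carrier G" and H: "H \<subseteq> carrier G"
  shows "fixsp G \<rho> ((\<lambda>h. g \<otimes> h \<otimes> inv g) ` H) = \<rho> g ` fixsp G \<rho> H"
proof -
  have conj_fixes: "\<rho> (g \<otimes> h \<otimes> inv g) y = y \<longleftrightarrow> \<rho> h (\<rho> (inv g) y) = \<rho> (inv g) y"
    if "h \<in> H" for h y
  proof -
    have "\<rho> (g \<otimes> h \<otimes> inv g) y = \<rho> g (\<rho> h (\<rho> (inv g) y))"
      using g H that by (auto simp: act_mult)
    then show ?thesis
      by (metis g act_inv_act act_act_inv)
  qed
  have "y \<in> fixsp G \<rho> ((\<lambda>h. g \<otimes> h \<otimes> inv g) ` H) \<longleftrightarrow> \<rho> (inv g) y \<in> fixsp G \<rho> H" for y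
    using g H conj_fixes by (auto simp: fixsp_def stab_def)
  moreover have "y \<in> \<rho> g ` A \<longleftrightarrow> \<rho> (inv g) y \<in> A" for y A
    using g by (metis act_act_inv act_inv_act image_iff)
  ultimately show ?thesis
    by blast
qed

lemma fixsp_stab_act:
  assumes "g \<in> carrier G"
  shows "fixsp G \<rho> (stab G \<rho> (\<rho> g x)) = \<rho> g ` fixsp G \<rho> (stab G \<rho> x)"
proof -
  have "stab G \<rho> x \<subseteq> carrier G"
    by (auto simp: stab_def)
  then show ?thesis
    by (simp add: assms stab_act fixsp_conjugate)
qed

end

lemma orth_rep_action: "orth_rep G \<rho> \<Longrightarrow> action G \<rho>"
  unfolding orth_rep_def by (auto simp: action_axioms_def intro!: action.intro)

lemma standard_subset_domain:
  assumes "standard G \<rho> D f x0 U \<epsilon>"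
  shows "U \<subseteq> D"
proof
  fix x
  assume "x \<in> U"
  have "\<epsilon> > 0" and thicken_D: "thicken G \<rho> (stab G \<rho> x0) U \<epsilon> \<subseteq> D"
    using assms by (simp_all add: standard_def)
  moreover have "0 \<in> orthogonal_comp (fixsp G \<rho> (stab G \<rho> x0))"
    by (simp add: orthogonal_comp_def orthogonal_clauses)
  ultimately have "x + 0 \<in> thicken G \<rho> (stab G \<rho> x0) U \<epsilon>"
    using \<open>x \<in> U\<close> unfolding thicken_def by fastforce
  then show "x \<in> D"
    using thicken_D by auto
qed

lemma standard_zero:
  assumes "standard G \<rho> D f x0 U \<epsilon>"
  shows "x0 \<in> U" and "f x0 = 0"
proof -
  have "{x\<in>D. f x = 0} \<inter> U = {x0}"
    using assms unfolding standard_def by (elim conjE)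
  then have "x0 \<in> {x\<in>D. f x = 0} \<inter> U"
    by simp
  then show "x0 \<in> U" and "f x0 = 0"
    by simp_all
qed

lemma standard_stab:
  assumes "standard G \<rho> D f x0 U \<epsilon>" and "x \<in> U"
  shows "stab G \<rho> x = stab G \<rho> x0"
proof -
  have "openin (top_of_set (orbtype G \<rho> (stab G \<rho> x0))) U"
    using assms(1) by (simp add: standard_def)
  then show ?thesis
    using assms(2) openin_imp_subset by (fastforce simp: orbtype_def)
qed

lemma standard_subset_fixsp:
  "standard G \<rho> D f x0 U \<epsilon> \<Longrightarrow> U \<subseteq> fixsp G \<rho> (stab G \<rho> x0)"
  by (auto simp: fixsp_def dest: standard_stab)

lemma standard_image_subset_fixsp:
  assumes "in_CG G \<rho> D f" and "standard G \<rho> D f x0 U \<epsilon>"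
  shows "f ` U \<subseteq> fixsp G \<rho> (stab G \<rho> x0)"
proof
  fix y
  assume "y \<in> f ` U"
  then obtain x where x: "x \<in> U" and y: "y = f x"
    by blast
  have "x \<in> D"
    using x standard_subset_domain[OF assms(2)] by blast
  then have equivariant: "f (\<rho> h x) = \<rho> h (f x)" if "h \<in> carrier G" for h
    using that assms(1) by (simp add: in_CG_def)
  have "\<rho> h (f x) = f x" if "h \<in> stab G \<rho> x" for h
    using that equivariant[of h] by (simp add: stab_def)
  then show "y \<in> fixsp G \<rho> (stab G \<rho> x0)"
    using standard_stab[OF assms(2) x] by (auto simp: y fixsp_def stab_def)
qed

theorem proposition4p1:
  fixes G :: "('g, 'b) monoid_scheme"
    and \<rho> :: "'g \<Rightarrow> 'v::euclidean_space \<Rightarrow> 'v"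
    and D :: "'v set" and f :: "'v \<Rightarrow> 'v"
    and x0 :: 'v and U :: "'v set" and \<epsilon> :: real and g :: 'g
  assumes "orth_rep G \<rho>"
    and "in_CG G \<rho> D f"
    and "standard G \<rho> D f x0 U \<epsilon>"
    and "g \<in> carrier G"
  shows "local_degree (fixsp G \<rho> (stab G \<rho> (\<rho> g x0))) (\<rho> g ` U) f
         = local_degree (fixsp G \<rho> (stab G \<rho> x0)) U f"
proof -
  interpret action G \<rho>
    using assms(1) by (rule orth_rep_action)
  have T: "orthogonal_transformation (\<rho> g)"
    using assms(1,4) by (simp add: orth_rep_def)
  have "U \<subseteq> D"
    using assms(3) by (rule standard_subset_domain)
  then have "continuous_on U f" and "\<And>x. x \<in> U \<Longrightarrow> f (\<rho> g x) = \<rho> g (f x)"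
    using assms(2,4) by (auto simp: in_CG_def intro: continuous_on_subset)
  then have "local_degree (\<rho> g ` fixsp G \<rho> (stab G \<rho> x0)) (\<rho> g ` U) f
      = local_degree (fixsp G \<rho> (stab G \<rho> x0)) U f"
    by (intro local_degree_orthogonal_image[OF T standard_subset_fixsp[OF assms(3)]
          standard_image_subset_fixsp[OF assms(2,3)] _ _ standard_zero[OF assms(3)]])
  then show ?thesis
    by (simp add: fixsp_stab_act[OF assms(4)])
qed

end
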